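(* Let $\boldsymbol{\rho}$ be a $d\times d$ correlation matrix with coarsest partition $G^{\star}$, and let $\widehat{\boldsymbol{\rho}}$ be any real symmetric $d\times d$ matrix. Set $$\tau:=\max_{i,j,l\in[d]}\big|(\widehat\rho_{il}-\widehat\rho_{jl})-(\rho_{il}-\rho_{jl})\big|,\qquad \Delta:=\min_{i\not\sim j}\mathrm{CORD}(i,j)$$ (with $\Delta=+\infty$ if $G^\star$ has a single block). If $\tau\le\varepsilon<\Delta-\tau$, then the PARTITION procedure with inputs $\mathbf{D}=\widehat{\mathrm{CORD}}$ and $\varepsilon$ (with arbitrary tie-breaking in the argmin) outputs $\widehat G=G^{\star}$.
   Context: $[d]=\{1,\dots,d\}$. The coarsest partition $G^\star$ of $[d]$ consists of the equivalence classes of $i\sim j\iff \max_{l\neq i,j}|\rho_{il}-\rho_{jl}|=0$; $i\not\sim j$ means $i,j$ lie in different blocks. $\mathrm{CORD}(i,j):=\max_{l\neq i,j}|\rho_{il}-\rho_{jl}|$ and $\widehat{\mathrm{CORD}}(i,j):=\max_{l\neq i,j}|\widehat\rho_{il}-\widehat\rho_{jl}|$ for $i,j\in[d]$ (in particular both equal $0$ when $i=j$). PARTITION$(\mathbf{D},\varepsilon)$, for a $d\times d$ dissimilarity matrix $\mathbf{D}$ and $\varepsilon>0$: initialize $S=[d]$; while $S\neq\emptyset$: if $|S|=1$, output $S$ as a new block; if $|S|>1$, pick $(i,j)\in\operatorname{argmin}_{i,j\in S,\,i\neq j}\mathbf{D}(i,j)$; if $\mathbf{D}(i,j)>\varepsilon$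 the new block is $\{i\}$, otherwise the new block is $\{k\in S:\min(\mathbf{D}(i,k),\mathbf{D}(j,k))\le\varepsilon\}$; remove the new block from $S$ and repeat. The output $\widehat G$ is the collection of blocks produced. *)

theory Defs
  imports Main "HOL-Library.Extended_Real"
begin

text \<open>Indices [d] are the elements of a finite type 'd (so d = CARD('d) \<ge> 1);
  d x d matrices are functions 'd \<Rightarrow> 'd \<Rightarrow> real.\<close>

definition symmetric_mat :: "('d \<Rightarrow> 'd \<Rightarrow> real) \<Rightarrow> bool" where
  "symmetric_mat A \<longleftrightarrow> (\<forall>i j. A i j = A j i)"

definition correlation_matrix :: "('d::finite \<Rightarrow> 'd \<Rightarrow> real) \<Rightarrow> bool" where
  "correlation_matrix A \<longleftrightarrow> symmetric_mat A \<and> (\<forall>i. A i i = 1) \<and>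
     (\<forall>x::'d \<Rightarrow> real. 0 \<le> (\<Sum>i\<in>UNIV. \<Sum>j\<in>UNIV. x i * A i j * x j))"

definition CORD :: "('d::finite \<Rightarrow> 'd \<Rightarrow> real) \<Rightarrow> 'd \<Rightarrow> 'd \<Rightarrow> real" where
  "CORD A i j = Max (insert 0 {\<bar>A i l - A j l\<bar> | l. l \<noteq> i \<and> l \<noteq> j})"

definition cord_equiv :: "('d::finite \<Rightarrow> 'd \<Rightarrow> real) \<Rightarrow> ('d \<times> 'd) set" where
  "cord_equiv A = {(i, j). CORD A i j = 0}"

definition coarsest_partition :: "('d::finite \<Rightarrow> 'd \<Rightarrow> real) \<Rightarrow> 'd set set" where
  "coarsest_partition A = UNIV // cord_equiv A"

definition Delta :: "('d::finite \<Rightarrow> 'd \<Rightarrow> real) \<Rightarrow> ereal" where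
  "Delta A = (if \<exists>i j. (i, j) \<notin> cord_equiv A
              then ereal (Min {CORD A i j | i j. (i, j) \<notin> cord_equiv A})
              else \<infinity>)"

definition tau :: "('d::finite \<Rightarrow> 'd \<Rightarrow> real) \<Rightarrow> ('d \<Rightarrow> 'd \<Rightarrow> real) \<Rightarrow> real" where
  "tau Ahat A = Max {\<bar>(Ahat i l - Ahat j l) - (A i l - A j l)\<bar> | i j l. True}"

text \<open>One step of PARTITION: from the current set S, the new block B can be
  produced (for some admissible tie-breaking choice of the argmin).\<close>
inductive partition_step :: "('d \<Rightarrow> 'd \<Rightarrow> real) \<Rightarrow> real \<Rightarrow> 'd set \<Rightarrow> 'd set \<Rightarrow> bool"
  for D :: "'d \<Rightarrow> 'd \<Rightarrow> real" and eps :: real where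
  single: "card S = 1 \<Longrightarrow> partition_step D eps S S"
| far: "\<lbrakk>card S > 1; i \<in> S; j \<in> S; i \<noteq> j;
         \<forall>i'\<in>S. \<forall>j'\<in>S. i' \<noteq> j' \<longrightarrow> D i j \<le> D i' j'; D i j > eps\<rbrakk>
        \<Longrightarrow> partition_step D eps S {i}"
| near: "\<lbrakk>card S > 1; i \<in> S; j \<in> S; i \<noteq> j;
         \<forall>i'\<in>S. \<forall>j'\<in>S. i' \<noteq> j' \<longrightarrow> D i j \<le> D i' j'; \<not> D i j > eps\<rbrakk>
        \<Longrightarrow> partition_step D eps S {k\<in>S. min (D i k) (D j k) \<le> eps}"

inductive partition_run :: "('d \<Rightarrow> 'd \<Rightarrow> real) \<Rightarrow> real \<Rightarrow> 'd set \<Rightarrow> 'd set set \<Rightarrow> bool"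
  for D :: "'d \<Rightarrow> 'd \<Rightarrow> real" and eps :: real where
  finished: "partition_run D eps {} {}"
| step: "\<lbrakk>S \<noteq> {}; partition_step D eps S B; partition_run D eps (S - B) G\<rbrakk>
         \<Longrightarrow> partition_run D eps S (insert B G)"

definition PARTITION_output :: "('d::finite \<Rightarrow> 'd \<Rightarrow> real) \<Rightarrow> real \<Rightarrow> 'd set set \<Rightarrow> bool" where
  "PARTITION_output D eps G \<longleftrightarrow> partition_run D eps UNIV G"

end

theory Submission
  imports Defs
begin

text \<open>Since every entry difference of \<rho>hat is within \<tau> of the corresponding one of \<rho>,
  the dissimilarities CORD \<rho>hat and CORD \<rho> differ by at most \<tau>. Hence CORD \<rho>hat i k \<le> \<epsilon>
  holds exactly when i \<sim> k: for i \<sim> k it is at most \<tau> \<le> \<epsilon>, otherwise it is at least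
  \<Delta> - \<tau> > \<epsilon>. Whenever the thresholded dissimilarity is an equivalence relation, every
  block produced by PARTITION is an equivalence class of the remaining set (a singleton
  if the closest pair is far apart, the class of the closest pair otherwise), so the
  output is the quotient. Termination holds since every block is nonempty.\<close>

lemma finite_CORD_values:
  "finite {\<bar>A i l - A j l\<bar> | l. l \<noteq> i \<and> l \<noteq> j}" for A :: "'d::finite \<Rightarrow> 'd \<Rightarrow> real"
  by (rule finite_image_set) simp

lemma CORD_nonneg: "0 \<le> CORD A i j"
  unfolding CORD_def by (rule Max_ge) (auto simp: finite_CORD_values)

lemma CORD_ge: "l \<noteq> i \<Longrightarrow> l \<noteq> j \<Longrightarrow> \<bar>A i l - A j l\<bar> \<le> CORD A i j"
  unfolding CORD_def by (rule Max_ge) (auto simp: finite_CORD_values)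

lemma CORD_le:
  assumes "0 \<le> t" "\<And>l. l \<noteq> i \<Longrightarrow> l \<noteq> j \<Longrightarrow> \<bar>A i l - A j l\<bar> \<le> t"
  shows "CORD A i j \<le> t"
  unfolding CORD_def using assms by (subst Max_le_iff) (auto simp: finite_CORD_values)

lemma CORD_eq_0_iff: "CORD A i j = 0 \<longleftrightarrow> (\<forall>l. l \<noteq> i \<longrightarrow> l \<noteq> j \<longrightarrow> A i l = A j l)"
proof
  assume "CORD A i j = 0"
  then show "\<forall>l. l \<noteq> i \<longrightarrow> l \<noteq> j \<longrightarrow> A i l = A j l"
    using CORD_ge[of _ i j A] by fastforce
next
  assume "\<forall>l. l \<noteq> i \<longrightarrow> l \<noteq> j \<longrightarrow> A i l = A j l"
  then have "CORD A i j \<le> 0" by (intro CORD_le) auto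
  with CORD_nonneg[of A i j] show "CORD A i j = 0" by simp
qed

lemma CORD_le_CORD_add:
  assumes "0 \<le> t" and diff: "\<And>i j l. \<bar>(B i l - B j l) - (A i l - A j l)\<bar> \<le> t"
  shows "CORD B i k \<le> CORD A i k + t"
proof (rule CORD_le)
  show "0 \<le> CORD A i k + t" using CORD_nonneg[of A i k] \<open>0 \<le> t\<close> by simp
  fix l assume "l \<noteq> i" "l \<noteq> k"
  then show "\<bar>B i l - B k l\<bar> \<le> CORD A i k + t"
    using diff[of i l k] CORD_ge[of l i k A] by linarith
qed

lemma trans_cord_equiv:
  assumes "symmetric_mat A"
  shows "trans (cord_equiv A)"
proof (rule transI)
  fix i j k assume "(i, j) \<in> cord_equiv A" "(j, k) \<in> cord_equiv A"
  then have ij: "\<And>l. l \<noteq> i \<Longrightarrow> l \<noteq> j \<Longrightarrow> A i l = A j l"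
    and jk: "\<And>l. l \<noteq> j \<Longrightarrow> l \<noteq> k \<Longrightarrow> A j l = A k l"
    by (auto simp: cord_equiv_def CORD_eq_0_iff)
  have sym: "\<And>a b. A a b = A b a" using assms by (auto simp: symmetric_mat_def)
  have "A i l = A k l" if "l \<noteq> i" "l \<noteq> k" for l
  proof (cases "l = j \<and> i \<noteq> j \<and> j \<noteq> k \<and> i \<noteq> k")
    case True
    \<comment> \<open>the column l = j is not covered directly; symmetry routes it through columns i and k\<close>
    have "A i j = A k i" using jk[of i] sym[of i j] True that by auto
    also have "\<dots> = A j k" using ij[of k] sym[of k i] True that by auto
    finally show ?thesis using True sym[of j k] by simp
  next
    case False
    then show ?thesis using ij jk that by metis
  qed
  then show "(i, k) \<in> cord_equiv A" by (auto simp: cord_equiv_def CORD_eq_0_iff)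
qed

lemma equiv_cord_equiv: "symmetric_mat A \<Longrightarrow> equiv UNIV (cord_equiv A)"
  by (intro equivI trans_cord_equiv) (auto simp: refl_on_def sym_def cord_equiv_def CORD_eq_0_iff)

lemma tau_ge: "\<bar>(Ahat i l - Ahat j l) - (A i l - A j l)\<bar> \<le> tau Ahat A"
  for A Ahat :: "'d::finite \<Rightarrow> 'd \<Rightarrow> real"
proof -
  let ?f = "\<lambda>(i, j, l). \<bar>(Ahat i l - Ahat j l) - (A i l - A j l)\<bar>"
  have range: "{\<bar>(Ahat i l - Ahat j l) - (A i l - A j l)\<bar> | i j l. True} = range ?f"
    by (auto simp: image_iff) metis
  have "?f (i, j, l) \<le> Max (range ?f)" by (rule Max_ge) (simp, rule rangeI)
  then show ?thesis unfolding tau_def range by simp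
qed

lemma tau_nonneg: "0 \<le> tau Ahat A"
  using tau_ge[of Ahat undefined undefined undefined A] by simp

lemma Delta_le_CORD:
  assumes "(i, k) \<notin> cord_equiv A"
  shows "Delta A \<le> ereal (CORD A i k)"
proof -
  let ?M = "{CORD A i j | i j. (i, j) \<notin> cord_equiv A}"
  have "?M \<subseteq> (\<lambda>(i, j). CORD A i j) ` UNIV" by auto
  then have "finite ?M" by (rule finite_subset) simp
  then have "Min ?M \<le> CORD A i k" using assms by (intro Min_le) auto
  with assms show ?thesis by (auto simp: Delta_def)
qed

lemma CORD_le_threshold_iff:
  fixes \<rho> \<rho>hat :: "'d::finite \<Rightarrow> 'd \<Rightarrow> real"
  assumes "tau \<rho>hat \<rho> \<le> \<epsilon>" and "ereal \<epsilon> < Delta \<rho> - ereal (tau \<rho>hat \<rho>)"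
  shows "CORD \<rho>hat i k \<le> \<epsilon> \<longleftrightarrow> (i, k) \<in> cord_equiv \<rho>"
proof
  let ?t = "tau \<rho>hat \<rho>"
  assume le: "CORD \<rho>hat i k \<le> \<epsilon>"
  show "(i, k) \<in> cord_equiv \<rho>"
  proof (rule ccontr)
    assume "(i, k) \<notin> cord_equiv \<rho>"
    then have "Delta \<rho> - ereal ?t \<le> ereal (CORD \<rho> i k) - ereal ?t"
      by (intro ereal_minus_mono Delta_le_CORD) simp_all
    with assms(2) have "ereal \<epsilon> < ereal (CORD \<rho> i k) - ereal ?t" by (rule less_le_trans)
    then have "\<epsilon> < CORD \<rho> i k - ?t" by simp
    moreover have "\<bar>(\<rho> i' l - \<rho> j' l) - (\<rho>hat i' l - \<rho>hat j' l)\<bar> \<le> ?t" for i' j' l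
      using tau_ge[of \<rho>hat i' l j' \<rho>] by (simp only: abs_minus_commute)
    then have "CORD \<rho> i k \<le> CORD \<rho>hat i k + ?t"
      by (rule CORD_le_CORD_add[OF tau_nonneg])
    ultimately show False using le by linarith
  qed
next
  assume "(i, k) \<in> cord_equiv \<rho>"
  moreover have "CORD \<rho>hat i k \<le> CORD \<rho> i k + tau \<rho>hat \<rho>"
    by (rule CORD_le_CORD_add[OF tau_nonneg tau_ge])
  ultimately show "CORD \<rho>hat i k \<le> \<epsilon>" using assms(1) by (simp add: cord_equiv_def)
qed

lemma partition_step_exists:
  assumes "finite S" "S \<noteq> {}"
  shows "\<exists>B. partition_step D eps S B"
proof (cases "card S = 1")
  case True
  then show ?thesis by (blast intro: partition_step.single)
next
  case False
  with assms have card: "card S > 1" using card_gt_0_iff[of S] by linarith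
  let ?P = "{(i, j). i \<in> S \<and> j \<in> S \<and> i \<noteq> j}"
  have "\<not> (\<forall>a\<in>S. \<forall>b\<in>S. a = b)"
    using card card_le_Suc0_iff_eq[OF \<open>finite S\<close>] by linarith
  then have "?P \<noteq> {}" by blast
  moreover have "finite ?P"
    by (rule finite_subset[of _ "S \<times> S"]) (use assms(1) in auto)
  ultimately obtain p where p: "p \<in> ?P" and p_min: "\<forall>q\<in>?P. D (fst p) (snd p) \<le> D (fst q) (snd q)"
    using ex_is_arg_min_if_finite[of ?P "\<lambda>q. D (fst q) (snd q)"]
    by (auto simp: is_arg_min_linorder)
  obtain i j where "p = (i, j)" by fastforce
  with p p_min have ij: "i \<in> S" "j \<in> S" "i \<noteq> j"
    and min: "\<forall>i'\<in>S. \<forall>j'\<in>S. i' \<noteq> j' \<longrightarrow> D i j \<le> D i' j'"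
    by auto
  show ?thesis
  proof (cases "D i j > eps")
    case True
    from partition_step.far[OF card ij min True] show ?thesis ..
  next
    case False
    from partition_step.near[OF card ij min False] show ?thesis ..
  qed
qed

lemma partition_step_nonempty_subset:
  assumes "partition_step D eps S B"
  shows "B \<noteq> {}" "B \<subseteq> S"
  using assms by (cases; force)+

lemma partition_run_exists:
  assumes "finite S"
  shows "\<exists>G. partition_run D eps S G"
  using assms
proof (induction "card S" arbitrary: S rule: less_induct)
  case less
  show ?case
  proof (cases "S = {}")
    case True
    then show ?thesis by (blast intro: partition_run.finished)
  next
    case False
    then obtain B where B: "partition_step D eps S B"
      using partition_step_exists[OF less.prems] by blast
    then have "card (S - B) < card S"
      using partition_step_nonempty_subset[OF B] less.prems by (intro psubset_card_mono) auto
    then obtain G where "partition_run D eps (S - B) G" using less by blast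
    with False B show ?thesis by (blast intro: partition_run.step)
  qed
qed

context
  fixes D :: "'a \<Rightarrow> 'a \<Rightarrow> real" and eps :: real and R :: "'a rel"
  assumes equiv: "equiv UNIV R" and threshold: "\<And>i k. D i k \<le> eps \<longleftrightarrow> (i, k) \<in> R"
begin

lemma partition_step_class:
  assumes closed: "\<forall>x\<in>S. R``{x} \<subseteq> S" and step: "partition_step D eps S B"
  shows "\<exists>x\<in>S. B = R``{x}"
  using step
proof cases
  case single
  then obtain x where S: "S = {x}" by (meson card_1_singletonE)
  have "x \<in> R``{x}" using equiv by (simp add: equiv_def refl_on_def)
  with closed single S show ?thesis by blast
next
  case (far i j)
  have "k = i" if "k \<in> R``{i}" for k
  proof (rule ccontr)
    assume "k \<noteq> i"
    moreover have "k \<in> S" using closed far that by blast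
    ultimately have "D i j \<le> D i k" using far by auto
    \<comment> \<open>so the pair (i, k) would be within eps although the minimal pair (i, j) is not\<close>
    moreover have "D i k \<le> eps" using threshold that by simp
    ultimately show False using far by simp
  qed
  moreover have "i \<in> R``{i}" using equiv by (simp add: equiv_def refl_on_def)
  ultimately have "R``{i} = {i}" by blast
  with far show ?thesis by auto
next
  case (near i j)
  then have "(i, j) \<in> R" using threshold by (simp add: not_less)
  then have "R``{j} = R``{i}" using equiv_class_eq[OF equiv] by metis
  then have "B = S \<inter> R``{i}"
    using near(1) threshold by (auto simp: min_le_iff_disj)
  with near closed show ?thesis by blast
qed

lemma partition_run_quotient:
  "partition_run D eps S G \<Longrightarrow> \<forall>x\<in>S. R``{x} \<subseteq> S \<Longrightarrow> G = (\<lambda>x. R``{x}) ` S"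
proof (induction rule: partition_run.induct)
  case finished
  then show ?case by simp
next
  case (step S B G)
  obtain x where x: "x \<in> S" "B = R``{x}"
    using partition_step_class[OF step.prems step.hyps(2)] by blast
  have "B \<subseteq> S" using step.hyps(2) by (rule partition_step_nonempty_subset)
  have "x \<in> B" using x equiv_class_self[OF equiv] by simp
  have same_class: "R``{y} = B" if "y \<in> B" for y
    using equiv_class_eq[OF equiv, of x y] x that by simp
  have "R``{y} \<subseteq> S - B" if y: "y \<in> S - B" for y
  proof -
    have "R``{y} \<inter> B = {}"
    proof (rule ccontr)
      assume "R``{y} \<inter> B \<noteq> {}"
      then obtain z where "z \<in> R``{y} \<inter> R``{x}" using x by blast
      then have "R``{y} = B" using x equiv_class_nondisjoint[OF equiv] equiv_class_eq[OF equiv] by metis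
      then show False using y equiv_class_self[OF equiv, of y] by simp
    qed
    then show ?thesis using step.prems y by blast
  qed
  then have "G = (\<lambda>y. R``{y}) ` (S - B)" by (intro step.IH) blast
  moreover have "(\<lambda>y. R``{y}) ` B = {B}" using same_class \<open>x \<in> B\<close> by blast
  moreover have "S = B \<union> (S - B)" using \<open>B \<subseteq> S\<close> by blast
  ultimately show ?case by (metis image_Un insert_is_Un)
qed

end

theorem lemma1:
  fixes \<rho> \<rho>hat :: "'d::finite \<Rightarrow> 'd \<Rightarrow> real" and \<epsilon> :: real
  assumes "correlation_matrix \<rho>"
    and "symmetric_mat \<rho>hat"
    and "0 < \<epsilon>"
    and "tau \<rho>hat \<rho> \<le> \<epsilon>"
    and "ereal \<epsilon> < Delta \<rho> - ereal (tau \<rho>hat \<rho>)"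
  shows "(\<exists>G. PARTITION_output (CORD \<rho>hat) \<epsilon> G) \<and>
         (\<forall>G. PARTITION_output (CORD \<rho>hat) \<epsilon> G \<longrightarrow> G = coarsest_partition \<rho>)"
proof
  show "\<exists>G. PARTITION_output (CORD \<rho>hat) \<epsilon> G"
    unfolding PARTITION_output_def by (simp add: partition_run_exists)
  have equiv: "equiv UNIV (cord_equiv \<rho>)"
    using assms(1) by (simp add: correlation_matrix_def equiv_cord_equiv)
  note threshold = CORD_le_threshold_iff[OF assms(4,5)]
  show "\<forall>G. PARTITION_output (CORD \<rho>hat) \<epsilon> G \<longrightarrow> G = coarsest_partition \<rho>"
  proof (intro allI impI)
    fix G assume "PARTITION_output (CORD \<rho>hat) \<epsilon> G"
    then have "G = (\<lambda>x. cord_equiv \<rho> `` {x}) ` UNIV"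
      unfolding PARTITION_output_def by (rule partition_run_quotient[OF equiv threshold]) simp
    then show "G = coarsest_partition \<rho>"
      by (auto simp: coarsest_partition_def quotient_def)
  qed
qed

end
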